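(* Let $\mathcal{T}=(\mathbb{K}_i,\phi_i)_{i=0,\dots,m}$ be a tower with $\mathbb{K}_0=\emptyset$ whose maps are elementary inclusions or elementary contractions, named according to the naming convention below, and let $\hat{\mathbb{K}}_0,\dots,\hat{\mathbb{K}}_m$ be the active small coning construction. For every $i$, a simplex $\sigma$ belongs to $\mathbb{K}_i$ if and only if $\sigma$ is an active simplex of $\hat{\mathbb{K}}_i$.
   Context: Elementary inclusion: $\mathbb{K}_{i+1}=\mathbb{K}_i\cup\{\sigma\}$, $\sigma\notin\mathbb{K}_i$, $\phi_i$ the inclusion. Elementary contraction of distinct vertices $u,v$ of $\mathbb{K}_i$: for one of them, say $v$, the vertex set of $\mathbb{K}_{i+1}$ is that of $\mathbb{K}_i$ minus $v$, $\phi_i(u)=\phi_i(v)=u$, $\phi_i$ is the identity on other vertices, and $\mathbb{K}_{i+1}=\phi_i(\mathbb{K}_i)$. Active small coning construction: $\hat{\mathbb{K}}_0=\emptyset$; vertices flagged active/inactive, a simplex is active iff all its vertices are; $\mathrm{Act}\overline{\mathrm{St}}(w,\hat{\mathbb{K}}_i)$ = active simplices of $\hat{\mathbb{K}}_i$ in the closed star of $w$ (all faces of simplices containing $w$). Inclusion of $\sigma$: $\hat{\mathbb{K}}_{i+1}=\hat{\mathbb{K}}_i\cup\{\sigma\}$, a new vertex marked active. Contraction of $u,v$: if $|\mathrm{Act}\overline{\mathrm{St}}(u,\hat{\mathbb{K}}_i)|\le|\mathrm{Act}\overline{\mathrm{St}}(v,\hat{\mathbb{K}}_i)|$, $\hat{\mathbb{K}}_{i+1}=\hat{\mathbb{K}}_i\cup\{\{v\}\cup\tau:\tau\in\mathrm{Act}\overline{\mathrm{St}}(u,\hat{\mathbb{K}}_i)\}$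 and $u$ is marked inactive; otherwise the same with $u,v$ exchanged. Naming convention: each contraction maps $u$ and $v$ to the vertex not marked inactive in that step. *)

theory Defs
  imports Main
begin

definition simplicial_complex :: "'v set set \<Rightarrow> bool" where
  "simplicial_complex K \<longleftrightarrow>
     (\<forall>\<sigma>\<in>K. finite \<sigma> \<and> \<sigma> \<noteq> {} \<and> (\<forall>\<tau>. \<tau> \<noteq> {} \<and> \<tau> \<subseteq> \<sigma> \<longrightarrow> \<tau> \<in> K))"

definition vertices :: "'v set set \<Rightarrow> 'v set" where
  "vertices K = {w. {w} \<in> K}"

datatype 'v elem_op = Incl "'v set" | Contr 'v 'v

definition closed_star :: "'v \<Rightarrow> 'v set set \<Rightarrow> 'v set set" where
  "closed_star w L = {\<tau> \<in> L. \<exists>\<rho>\<in>L. w \<in> \<rho> \<and> \<tau> \<subseteq> \<rho>}"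

definition act_simplices :: "'v set set \<times> 'v set \<Rightarrow> 'v set set" where
  "act_simplices S = {\<tau> \<in> fst S. \<tau> \<subseteq> snd S}"

definition act_closed_star :: "'v \<Rightarrow> 'v set set \<times> 'v set \<Rightarrow> 'v set set" where
  "act_closed_star w S = {\<tau> \<in> closed_star w (fst S). \<tau> \<subseteq> snd S}"

text \<open>For a contraction of u and v in coning state S: the pair (vertex marked inactive,
  surviving vertex).\<close>
definition contr_choice :: "'v \<Rightarrow> 'v \<Rightarrow> 'v set set \<times> 'v set \<Rightarrow> 'v \<times> 'v" where
  "contr_choice u v S =
     (if card (act_closed_star u S) \<le> card (act_closed_star v S) then (u, v) else (v, u))"

text \<open>One step of the active small coning construction; state = (complex, active vertices).\<close>
fun coning_step :: "'v elem_op \<Rightarrow> 'v set set \<times> 'v set \<Rightarrow> 'v set set \<times> 'v set" where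
  "coning_step (Incl \<sigma>) (L, A) = (L \<union> {\<sigma>}, if card \<sigma> = 1 then A \<union> \<sigma> else A)"
| "coning_step (Contr u v) (L, A) =
     (let (l, s) = contr_choice u v (L, A)
      in (L \<union> (insert s ` act_closed_star l (L, A)), A - {l}))"

primrec coning :: "(nat \<Rightarrow> 'v elem_op) \<Rightarrow> nat \<Rightarrow> 'v set set \<times> 'v set" where
  "coning ops 0 = ({}, {})"
| "coning ops (Suc i) = coning_step (ops i) (coning ops i)"

definition contract_map :: "'v \<Rightarrow> 'v \<Rightarrow> 'v \<Rightarrow> 'v" where
  "contract_map l s = (\<lambda>x. if x = l then s else x)"

text \<open>K' arises from K by the elementary operation op; contractions are named according
  to the naming convention (both vertices map to the one not marked inactive in state S).\<close>
fun tower_step :: "'v elem_op \<Rightarrow> 'v set set \<times> 'v set \<Rightarrow> 'v set set \<Rightarrow> 'v set set \<Rightarrow> bool" where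
  "tower_step (Incl \<sigma>) S K K' \<longleftrightarrow> finite \<sigma> \<and> \<sigma> \<noteq> {} \<and> \<sigma> \<notin> K \<and> K' = K \<union> {\<sigma>}"
| "tower_step (Contr u v) S K K' \<longleftrightarrow>
     u \<noteq> v \<and> u \<in> vertices K \<and> v \<in> vertices K \<and>
     (let (l, s) = contr_choice u v S in K' = (\<lambda>\<tau>. contract_map l s ` \<tau>) ` K)"

end

theory Submission
  imports Defs
begin

text \<open>By induction along the tower, the coning complex \<open>L\<^sub>i\<close> with active vertex set \<open>A\<^sub>i\<close>
  stays closed under nonempty faces, and its active simplices are exactly \<open>K\<^sub>i\<close>. An inclusion
  adds the same simplex to both sides; a singleton is new to \<open>L\<^sub>i\<close> because the vertex is new to
  the tower and every vertex of \<open>L\<^sub>i\<close> occurred in some earlier \<open>K\<^sub>j\<close>. A contraction of \<open>l\<close> into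
  \<open>s\<close> deactivates \<open>l\<close> and cones \<open>s\<close> over the active closed star of \<open>l\<close>: an active simplex
  \<open>\<tau>\<close> containing \<open>l\<close> reappears as \<open>insert s (\<tau> - {l})\<close>, one not containing \<open>l\<close> is unchanged,
  and these are precisely the images of \<open>K\<^sub>i\<close> under the contraction map.\<close>

definition face_closed :: "'v set set \<Rightarrow> bool" where
  "face_closed L \<longleftrightarrow> (\<forall>\<rho>\<in>L. \<forall>\<tau>. \<tau> \<noteq> {} \<and> \<tau> \<subseteq> \<rho> \<longrightarrow> \<tau> \<in> L)"

lemma face_closedD: "face_closed L \<Longrightarrow> \<rho> \<in> L \<Longrightarrow> \<tau> \<noteq> {} \<Longrightarrow> \<tau> \<subseteq> \<rho> \<Longrightarrow> \<tau> \<in> L"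
  unfolding face_closed_def by blast

lemma simplicial_complex_face:
  "simplicial_complex K \<Longrightarrow> \<sigma> \<in> K \<Longrightarrow> \<tau> \<noteq> {} \<Longrightarrow> \<tau> \<subseteq> \<sigma> \<Longrightarrow> \<tau> \<in> K"
  unfolding simplicial_complex_def by blast

lemma face_closed_insert:
  assumes "face_closed L" and "\<And>\<tau>. \<tau> \<noteq> {} \<Longrightarrow> \<tau> \<subseteq> \<sigma> \<Longrightarrow> \<tau> \<in> insert \<sigma> L"
  shows "face_closed (insert \<sigma> L)"
  using assms unfolding face_closed_def by blast

lemma act_closed_starD:
  assumes "face_closed L" and "\<tau> \<in> act_closed_star l (L, A)"
  shows "insert l \<tau> \<in> L" and "\<tau> \<in> L" and "\<tau> \<subseteq> A"
proof -
  from assms(2) obtain \<rho> where "\<rho> \<in> L" "l \<in> \<rho>" "\<tau> \<subseteq> \<rho>"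
    by (auto simp: act_closed_star_def closed_star_def)
  then show "insert l \<tau> \<in> L" using face_closedD[OF assms(1), of \<rho> "insert l \<tau>"] by simp
  show "\<tau> \<in> L" "\<tau> \<subseteq> A" using assms(2) by (auto simp: act_closed_star_def closed_star_def)
qed

lemma act_closed_starI:
  assumes "face_closed L" and "insert l \<tau> \<in> L" and "\<tau> \<noteq> {}" and "\<tau> \<subseteq> A"
  shows "\<tau> \<in> act_closed_star l (L, A)"
proof -
  have "\<tau> \<in> L" using face_closedD[OF assms(1,2,3)] by blast
  then show ?thesis using assms(2,4) by (auto simp: act_closed_star_def closed_star_def)
qed

lemma face_closed_cone_act_closed_star:
  assumes fc: "face_closed L" and s: "{s} \<in> L"
  shows "face_closed (L \<union> insert s ` act_closed_star l (L, A))"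
    (is "face_closed (L \<union> insert s ` ?C)")
proof -
  have cone_face: "\<tau> \<in> L \<union> insert s ` ?C"
    if \<tau>': "\<tau>' \<in> ?C" "\<tau> \<noteq> {}" "\<tau> \<subseteq> insert s \<tau>'" for \<tau> \<tau>'
  proof -
    note \<tau>'_in = act_closed_starD[OF fc \<tau>'(1)]
    consider "s \<notin> \<tau>" | "\<tau> = {s}" | "s \<in> \<tau>" "\<tau> - {s} \<noteq> {}" by blast
    then show ?thesis
    proof cases
      case 1
      then show ?thesis using face_closedD[OF fc \<tau>'_in(2) \<tau>'(2)] \<tau>'(3) by blast
    next
      case 2
      then show ?thesis using s by blast
    next
      case 3
      have "insert l (\<tau> - {s}) \<subseteq> insert l \<tau>'" using \<tau>'(3) by blast
      then have "insert l (\<tau> - {s}) \<in> L"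
        using face_closedD[OF fc \<tau>'_in(1), of "insert l (\<tau> - {s})"] by simp
      moreover have "\<tau> - {s} \<subseteq> A" using \<tau>'(3) \<tau>'_in(3) by blast
      ultimately have "\<tau> - {s} \<in> ?C" using act_closed_starI[OF fc] 3(2) by blast
      moreover have "\<tau> = insert s (\<tau> - {s})" using 3(1) by blast
      ultimately show ?thesis by blast
    qed
  qed
  show ?thesis unfolding face_closed_def
  proof (intro ballI allI impI)
    fix \<rho> \<tau> assume \<rho>: "\<rho> \<in> L \<union> insert s ` ?C" and \<tau>: "\<tau> \<noteq> {} \<and> \<tau> \<subseteq> \<rho>"
    show "\<tau> \<in> L \<union> insert s ` ?C"
    proof (cases "\<rho> \<in> L")
      case True
      then show ?thesis using face_closedD[OF fc True] \<tau> by blast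
    next
      case False
      then obtain \<tau>' where "\<tau>' \<in> ?C" "\<rho> = insert s \<tau>'" using \<rho> by blast
      then show ?thesis using cone_face \<tau> by blast
    qed
  qed
qed

lemma act_simplices_cone_act_closed_star:
  assumes fc: "face_closed L" and "{s} \<in> L" and "s \<in> A" and "l \<in> A" and "l \<noteq> s"
  shows "(\<lambda>\<tau>. contract_map l s ` \<tau>) ` act_simplices (L, A)
    = act_simplices (L \<union> insert s ` act_closed_star l (L, A), A - {l})"
    (is "?image = act_simplices (?L', _)")
proof
  show "?image \<subseteq> act_simplices (?L', A - {l})"
  proof
    fix x assume "x \<in> ?image"
    then obtain \<tau> where \<tau>: "\<tau> \<in> L" "\<tau> \<subseteq> A" and x: "x = contract_map l s ` \<tau>"
      by (auto simp: act_simplices_def)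
    consider "l \<notin> \<tau>" | "\<tau> = {l}" | "l \<in> \<tau>" "\<tau> - {l} \<noteq> {}" by blast
    then show "x \<in> act_simplices (?L', A - {l})"
    proof cases
      case 1
      then have "x = \<tau>" using x by (auto simp: contract_map_def)
      then show ?thesis using 1 \<tau> by (auto simp: act_simplices_def)
    next
      case 2
      then have "x = {s}" using x by (simp add: contract_map_def)
      then show ?thesis using assms by (auto simp: act_simplices_def)
    next
      case 3
      then have "\<tau> - {l} \<in> act_closed_star l (L, A)"
        using act_closed_starI[OF fc, of l "\<tau> - {l}"] \<tau> by (auto simp: insert_absorb)
      moreover have "x = insert s (\<tau> - {l})" using x 3(1) by (auto simp: contract_map_def)
      ultimately show ?thesis using \<tau>(2) assms by (auto simp: act_simplices_def)
    qed
  qed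
  show "act_simplices (?L', A - {l}) \<subseteq> ?image"
  proof
    fix x assume x: "x \<in> act_simplices (?L', A - {l})"
    then have xA: "x \<subseteq> A - {l}" by (simp add: act_simplices_def)
    show "x \<in> ?image"
    proof (cases "x \<in> L")
      case True
      then have "x \<in> act_simplices (L, A)" using xA by (auto simp: act_simplices_def)
      moreover have "x = contract_map l s ` x" using xA by (auto simp: contract_map_def)
      ultimately show ?thesis by (rule rev_image_eqI)
    next
      case False
      then obtain \<tau> where \<tau>: "\<tau> \<in> act_closed_star l (L, A)" and x_eq: "x = insert s \<tau>"
        using x by (auto simp: act_simplices_def)
      have "insert l \<tau> \<in> act_simplices (L, A)"
        using act_closed_starD[OF fc \<tau>] \<open>l \<in> A\<close> by (simp add: act_simplices_def)
      moreover have "x = contract_map l s ` insert l \<tau>"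
        using x_eq xA by (auto simp: contract_map_def)
      ultimately show ?thesis by (rule rev_image_eqI)
    qed
  qed
qed

lemma coning_step_Incl:
  assumes K: "K = act_simplices (L, A)" and fc: "face_closed L"
    and sc: "simplicial_complex (insert \<sigma> K)"
    and fresh: "\<And>w. \<sigma> = {w} \<Longrightarrow> w \<notin> \<Union> L"
  shows "insert \<sigma> K = act_simplices (coning_step (Incl \<sigma>) (L, A))"
    and "face_closed (fst (coning_step (Incl \<sigma>) (L, A)))"
proof -
  have "K \<subseteq> L" using K by (simp add: act_simplices_def)
  then have "\<tau> \<in> insert \<sigma> L" if "\<tau> \<noteq> {}" "\<tau> \<subseteq> \<sigma>" for \<tau>
    using simplicial_complex_face[OF sc, of \<sigma> \<tau>] that by auto
  then show "face_closed (fst (coning_step (Incl \<sigma>) (L, A)))"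
    using face_closed_insert[OF fc] by simp
  show "insert \<sigma> K = act_simplices (coning_step (Incl \<sigma>) (L, A))"
  proof (cases "card \<sigma> = 1")
    case True
    then obtain w where w: "\<sigma> = {w}" by (auto simp: card_Suc_eq)
    then have "\<tau> \<in> L \<Longrightarrow> w \<notin> \<tau>" for \<tau> using fresh by blast
    then show ?thesis using K w by (auto simp: act_simplices_def)
  next
    case False
    have "{y} \<in> K" if "y \<in> \<sigma>" for y
      using simplicial_complex_face[OF sc, of \<sigma> "{y}"] that False by auto
    then have "\<sigma> \<subseteq> A" using K by (auto simp: act_simplices_def)
    then show ?thesis using K False by (auto simp: act_simplices_def)
  qed
qed

lemma coning_step_Contr:
  assumes K: "K = act_simplices (L, A)" and fc: "face_closed L"
    and "u \<noteq> v" and "{u} \<in> K" and "{v} \<in> K"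
    and choice: "contr_choice u v (L, A) = (l, s)"
  shows "(\<lambda>\<tau>. contract_map l s ` \<tau>) ` K = act_simplices (coning_step (Contr u v) (L, A))"
    and "face_closed (fst (coning_step (Contr u v) (L, A)))"
    and "\<Union> (fst (coning_step (Contr u v) (L, A))) \<subseteq> \<Union> L"
proof -
  have step: "coning_step (Contr u v) (L, A) =
      (L \<union> insert s ` act_closed_star l (L, A), A - {l})"
    using choice by simp
  have "(l = u \<and> s = v) \<or> (l = v \<and> s = u)"
    using choice by (auto simp: contr_choice_def split: if_splits)
  then have ls: "l \<noteq> s" "{s} \<in> L" "l \<in> A" "s \<in> A"
    using assms(3-5) K by (auto simp: act_simplices_def)
  show "(\<lambda>\<tau>. contract_map l s ` \<tau>) ` K = act_simplices (coning_step (Contr u v) (L, A))"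
    using act_simplices_cone_act_closed_star[OF fc ls(2,4,3,1)] K step by simp
  show "face_closed (fst (coning_step (Contr u v) (L, A)))"
    using face_closed_cone_act_closed_star[OF fc ls(2)] step by simp
  show "\<Union> (fst (coning_step (Contr u v) (L, A))) \<subseteq> \<Union> L"
  proof -
    have "\<Union> (act_closed_star l (L, A)) \<subseteq> \<Union> L"
      using act_closed_starD(2)[OF fc] by blast
    then show ?thesis using step ls(2) by auto
  qed
qed

lemma coning_tower_invariant:
  assumes "K 0 = {}"
    and "\<forall>i\<le>m. simplicial_complex (K i)"
    and "\<forall>i<m. tower_step (ops i) (coning ops i) (K i) (K (Suc i))"
    and "\<forall>i<m. \<forall>w. ops i = Incl {w} \<longrightarrow> (\<forall>j\<le>i. w \<notin> \<Union> (K j))"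
    and "i \<le> m"
  shows "K i = act_simplices (coning ops i) \<and> face_closed (fst (coning ops i))
    \<and> \<Union> (fst (coning ops i)) \<subseteq> (\<Union>j\<le>i. \<Union> (K j))"
  using \<open>i \<le> m\<close>
proof (induction i)
  case 0
  then show ?case using assms(1) by (simp add: act_simplices_def face_closed_def)
next
  case (Suc i)
  obtain L A where LA: "coning ops i = (L, A)" by fastforce
  have "i < m" using Suc.prems by simp
  with Suc.IH LA have IH: "K i = act_simplices (L, A)" "face_closed L"
    "\<Union> L \<subseteq> (\<Union>j\<le>i. \<Union> (K j))" by auto
  have tower: "tower_step (ops i) (L, A) (K i) (K (Suc i))"
    using assms(3) \<open>i < m\<close> LA by auto
  have L_vertices: "\<Union> L \<subseteq> (\<Union>j\<le>Suc i. \<Union> (K j))"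
    using IH(3) by (auto simp: atMost_Suc)
  have coning_Suc: "coning ops (Suc i) = coning_step (ops i) (L, A)" by (simp add: LA)
  show ?case
  proof (cases "ops i")
    case (Incl \<sigma>)
    have K_Suc: "K (Suc i) = insert \<sigma> (K i)" using tower Incl by simp
    have "simplicial_complex (K (Suc i))" using assms(2) Suc.prems by blast
    then have sc: "simplicial_complex (insert \<sigma> (K i))" by (simp only: K_Suc)
    have fresh: "w \<notin> \<Union> L" if "\<sigma> = {w}" for w
    proof -
      have "\<forall>j\<le>i. w \<notin> \<Union> (K j)" using assms(4) \<open>i < m\<close> Incl that by blast
      then show ?thesis using IH(3) by blast
    qed
    note step = coning_step_Incl[OF IH(1,2) sc fresh]
    have "\<sigma> \<subseteq> (\<Union>j\<le>Suc i. \<Union> (K j))" using K_Suc by auto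
    then have "\<Union> (fst (coning_step (Incl \<sigma>) (L, A))) \<subseteq> (\<Union>j\<le>Suc i. \<Union> (K j))"
      using L_vertices by simp
    with step show ?thesis unfolding coning_Suc Incl K_Suc by (intro conjI)
  next
    case (Contr u v)
    obtain l s where choice: "contr_choice u v (L, A) = (l, s)" by fastforce
    have "u \<noteq> v" "{u} \<in> K i" "{v} \<in> K i"
      and K_Suc: "K (Suc i) = (\<lambda>\<tau>. contract_map l s ` \<tau>) ` K i"
      using tower Contr choice by (auto simp: vertices_def)
    note step = coning_step_Contr[OF IH(1,2) this(1-3) choice]
    show ?thesis
      using step(1,2) order_trans[OF step(3) L_vertices] unfolding coning_Suc Contr K_Suc
      by (intro conjI)
  qed
qed

theorem lemma4:
  fixes ops :: "nat \<Rightarrow> 'v elem_op" and K :: "nat \<Rightarrow> 'v set set" and m :: nat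
  assumes "K 0 = {}"
    and "\<forall>i\<le>m. simplicial_complex (K i)"
    and "\<forall>i<m. tower_step (ops i) (coning ops i) (K i) (K (Suc i))"
    and "\<forall>i<m. \<forall>w. ops i = Incl {w} \<longrightarrow> (\<forall>j\<le>i. w \<notin> \<Union> (K j))"
  shows "\<forall>i\<le>m. \<forall>\<sigma>. \<sigma> \<in> K i \<longleftrightarrow> \<sigma> \<in> act_simplices (coning ops i)"
  using coning_tower_invariant[OF assms] by simp

end
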